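(* Let $\mathbf{F}\in\{\mathbf{R},\mathbf{C}\}$, $x_*\in\mathbf{F}^d$, and let $A_1,\dots,A_n\in\mathbf{H}_d$ be positive semidefinite, with exact measurements $y=\mathcal{A}(x_*x_*^* )$. For an integer $p\ge1$ consider $$\min_{X\in\mathbf{F}^{d\times p}} f_p(X),\qquad f_p(X)=\|y-\mathcal{A}(XX^* )\|^2 .$$ Suppose that for some constants $\alpha,\beta,L\ge0$, for all $X\in\mathbf{F}^{d\times p}$, $$\tfrac1n\|\mathcal{A}(XX^*-x_*x_*^* )\|^2\ge\alpha\|XX^*-x_*x_*^*\|_F^2+\beta(\|X\|_F^2-\|x_*\|^2)^2,$$ and $$\tfrac1n\mathcal{A}^*\mathcal{A}(x_*x_*^* )\preceq L\|x_*\|^2 I_d .$$ If $(p+2)\left(1+\frac{\beta}{p\beta+\alpha}\right)\alpha>2L$, then every second-order critical point $X$ of $f_p$ satisfies $XX^*=x_*x_*^*$.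
   Context: $\mathbf{H}_d$ denotes the set of $d\times d$ Hermitian matrices over $\mathbf{F}$ with the (real) Frobenius inner product $\langle A,B\rangle=\operatorname{Re}\operatorname{tr}(A^*B)$. $\mathcal{A}:\mathbf{H}_d\to\mathbf{R}^n$ is $\mathcal{A}(S)=(\langle A_1,S\rangle,\dots,\langle A_n,S\rangle)$, with adjoint $\mathcal{A}^*(z)=\sum_iz_iA_i$. $\preceq$ is the positive semidefinite order. A second-order critical point is a point where the gradient is zero and the Hessian quadratic form is positive semidefinite; in the complex case the objective is regarded as a function of the real and imaginary parts of $X$. *)

theory Defs
  imports "HOL-Analysis.Analysis"
begin

text \<open>Matrices are rendered with the HOL-Analysis vector types:
  a d x p matrix over F is of type F^'p^'d (rows indexed by 'd).
  The field F is R or C; the conjugation cj and the real part rp are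
  passed explicitly (cj = id, rp = id for R; cj = cnj, rp = Re for C).\<close>

definition adj :: "('a \<Rightarrow> 'a) \<Rightarrow> 'a^'m^'n \<Rightarrow> 'a^'n^'m" where
  "adj cj M = (\<chi> i j. cj (M $ j $ i))"

definition frob :: "('a::comm_ring_1 \<Rightarrow> 'a) \<Rightarrow> ('a \<Rightarrow> real) \<Rightarrow> 'a^'m^'n \<Rightarrow> 'a^'m^'n \<Rightarrow> real" where
  "frob cj rp A B = rp (\<Sum>i\<in>UNIV. \<Sum>j\<in>UNIV. cj (A $ i $ j) * B $ i $ j)"

definition meas :: "('a::comm_ring_1 \<Rightarrow> 'a) \<Rightarrow> ('a \<Rightarrow> real) \<Rightarrow> ('k \<Rightarrow> 'a^'d^'d) \<Rightarrow> 'a^'d^'d \<Rightarrow> real^'k" where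
  "meas cj rp A S = (\<chi> k. frob cj rp (A k) S)"

definition meas_adj :: "('k::finite \<Rightarrow> 'a::real_normed_algebra_1^'d^'d) \<Rightarrow> real^'k \<Rightarrow> 'a^'d^'d" where
  "meas_adj A z = (\<Sum>k\<in>UNIV. (z $ k) *\<^sub>R A k)"

definition outer :: "('a::comm_ring_1 \<Rightarrow> 'a) \<Rightarrow> 'a^'d \<Rightarrow> 'a^'d^'d" where
  "outer cj x = (\<chi> i j. x $ i * cj (x $ j))"

definition gram :: "('a::comm_ring_1 \<Rightarrow> 'a) \<Rightarrow> 'a^'p^'d \<Rightarrow> 'a^'d^'d" where
  "gram cj X = X ** adj cj X"

definition hermitian :: "('a \<Rightarrow> 'a) \<Rightarrow> 'a^'d^'d \<Rightarrow> bool" where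
  "hermitian cj M \<longleftrightarrow> adj cj M = M"

definition psd :: "('a::comm_ring_1 \<Rightarrow> 'a) \<Rightarrow> ('a \<Rightarrow> real) \<Rightarrow> 'a^'d^'d \<Rightarrow> bool" where
  "psd cj rp M \<longleftrightarrow> hermitian cj M \<and> (\<forall>v. rp (\<Sum>i\<in>UNIV. cj (v $ i) * (M *v v) $ i) \<ge> 0)"

definition loewner_le :: "('a::comm_ring_1 \<Rightarrow> 'a) \<Rightarrow> ('a \<Rightarrow> real) \<Rightarrow> 'a^'d^'d \<Rightarrow> 'a^'d^'d \<Rightarrow> bool" where
  "loewner_le cj rp A B \<longleftrightarrow> psd cj rp (B - A)"

definition fobj :: "('a::comm_ring_1 \<Rightarrow> 'a) \<Rightarrow> ('a \<Rightarrow> real) \<Rightarrow> ('k \<Rightarrow> 'a^'d^'d) \<Rightarrow> real^'k \<Rightarrow> 'a^'p^'d \<Rightarrow> real" where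
  "fobj cj rp A y X = (norm (y - meas cj rp A (gram cj X)))\<^sup>2"

text \<open>Second-order critical point of a real function on a real normed space
  (the complex matrices are regarded as a real vector space, i.e. as functions
  of real and imaginary parts): first Frechet derivative vanishes and the
  second Frechet derivative (Hessian) quadratic form is positive semidefinite.\<close>
definition sosp :: "('v::real_normed_vector \<Rightarrow> real) \<Rightarrow> 'v \<Rightarrow> bool" where
  "sosp f X \<longleftrightarrow> (\<exists>f' f''.
      (\<forall>Y. (f has_derivative blinfun_apply (f' Y)) (at Y)) \<and>
      (f' has_derivative blinfun_apply f'') (at X) \<and>
      f' X = 0 \<and>
      (\<forall>V. blinfun_apply (blinfun_apply f'' V) V \<ge> 0))"

end

theory Submission
  imports Defs
begin

text \<open>Let \<open>x\<^sub>1\<close> be the orthogonal projection of \<open>x\<^sub>*\<close> onto the column space of a second-order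
  critical point \<open>X\<close>, \<open>x\<^sub>2 = x\<^sub>* - x\<^sub>1\<close>, and let \<open>e = y - \<A>(X X\<^sup>*)\<close> be the residual.
  The first-order condition gives \<open>\<langle>e, \<A>(x\<^sub>2 x\<^sub>2\<^sup>*)\<rangle> = \<parallel>e\<parallel>\<^sup>2\<close>.
  The second-order condition in the \<open>p\<close> directions \<open>x\<^sub>2 e\<^sub>j\<^sup>*\<close>, summed over \<open>j\<close> and combined
  with a Cauchy-Schwarz inequality for the positive semidefinite \<open>A\<^sub>k\<close> and with the Loewner
  bound, yields \<open>(p + 2) \<parallel>e\<parallel>\<^sup>2 \<le> 2 n L \<parallel>x\<^sub>*\<parallel>\<^sup>2 \<parallel>x\<^sub>2\<parallel>\<^sup>2\<close>.
  On the other hand \<open>X X\<^sup>* - x\<^sub>* x\<^sub>*\<^sup>*\<close> splits orthogonally into a part \<open>N\<close> living on the column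
  space, whose trace squared is at most \<open>p \<parallel>N\<parallel>\<^sup>2\<close>, and a part involving \<open>x\<^sub>2\<close>; with the
  restricted isometry hypothesis this gives \<open>\<parallel>e\<parallel>\<^sup>2 / n \<ge> (1 + \<beta>/(p\<beta> + \<alpha>)) \<alpha> \<parallel>x\<^sub>*\<parallel>\<^sup>2 \<parallel>x\<^sub>2\<parallel>\<^sup>2\<close>.
  The hypothesis on the constants makes the two bounds compatible only if \<open>e = 0\<close>, and then
  restricted isometry forces \<open>X X\<^sup>* = x\<^sub>* x\<^sub>*\<^sup>*\<close>.\<close>

lemma sosp_quartic_line:
  fixes f :: "'v::real_normed_vector \<Rightarrow> real"
  assumes "sosp f X"
    and quartic: "\<And>t. f (X + t *\<^sub>R U) = c0 + c1*t + c2*t^2 + c3*t^3 + c4*t^4"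
  shows "c1 = 0" and "c2 \<ge> 0"
proof -
  obtain f' f'' where d1: "\<And>Y. (f has_derivative blinfun_apply (f' Y)) (at Y)"
    and d2: "(f' has_derivative blinfun_apply f'') (at X)"
    and crit: "f' X = 0" and pos: "\<And>V. blinfun_apply (blinfun_apply f'' V) V \<ge> 0"
    using assms(1) unfolding sosp_def by blast
  have line: "((\<lambda>t. X + t *\<^sub>R U) has_derivative (\<lambda>h. h *\<^sub>R U)) (at t)" for t
    by (auto intro!: derivative_eq_intros)
  have "((\<lambda>t. f (X + t *\<^sub>R U)) has_derivative (\<lambda>h. f' (X + t *\<^sub>R U) (h *\<^sub>R U))) (at t)" for t
    by (rule has_derivative_compose[OF line d1])
  then have D1: "((\<lambda>t. f (X + t *\<^sub>R U)) has_field_derivative f' (X + t *\<^sub>R U) U) (at t)" for t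
    by (simp add: has_field_derivative_def blinfun.scaleR_right mult_commute_abs)
  have P1: "((\<lambda>t. c0 + c1*t + c2*t^2 + c3*t^3 + c4*t^4)
      has_field_derivative (c1 + 2*c2*t + 3*c3*t^2 + 4*c4*t^3)) (at t)" for t
    by (auto intro!: derivative_eq_intros simp: algebra_simps power2_eq_square power3_eq_cube)
  have slope: "f' (X + t *\<^sub>R U) U = c1 + 2*c2*t + 3*c3*t^2 + 4*c4*t^3" for t
    using DERIV_unique[OF D1[of t]] P1[of t] quartic by simp
  show "c1 = 0" using slope[of 0] crit by simp
  have "((\<lambda>t. f' (X + t *\<^sub>R U)) has_derivative (\<lambda>h. f'' (h *\<^sub>R U))) (at 0)"
    using has_derivative_compose[OF line[of 0], of f' f''] d2 by simp
  then have "((\<lambda>t. f' (X + t *\<^sub>R U) U) has_derivative (\<lambda>h. f'' (h *\<^sub>R U) U)) (at 0)"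
    by (rule bounded_linear.has_derivative[OF blinfun.bounded_linear_left])
  then have D2: "((\<lambda>t. f' (X + t *\<^sub>R U) U) has_field_derivative f'' U U) (at 0)"
    by (simp add: has_field_derivative_def blinfun.scaleR_right blinfun.scaleR_left mult_commute_abs)
  have P2: "((\<lambda>t. c1 + 2*c2*t + 3*c3*t^2 + 4*c4*t^3) has_field_derivative 2*c2) (at 0)"
    by (auto intro!: derivative_eq_intros)
  have "f'' U U = 2*c2"
    using DERIV_unique[OF D2] P2 slope by simp
  with pos[of U] show "c2 \<ge> 0" by simp
qed

lemma nonneg_quadratic_discriminant:
  fixes a b c :: real
  assumes "c \<ge> 0" and nonneg: "\<And>l. 0 \<le> a + 2*b*l + c*l^2"
  shows "b^2 \<le> a*c"
proof (cases "c = 0")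
  case True
  show ?thesis
  proof (cases "b = 0")
    case False
    have "0 \<le> a + 2*b*(-(a+1)/(2*b))" using nonneg[of "-(a+1)/(2*b)"] True by simp
    also have "\<dots> = -1" using False by (simp add: field_simps)
    finally show ?thesis by simp
  qed (use True in simp)
next
  case False
  then have c: "c > 0" using assms(1) by simp
  have "0 \<le> a + 2*b*(-b/c) + c*(-b/c)^2" by (rule nonneg)
  also have "\<dots> = a - b^2/c" using c by (simp add: field_simps power2_eq_square)
  finally have "b^2/c \<le> a" by simp
  then show ?thesis using c by (simp add: field_simps mult.commute)
qed

text \<open>The scalar core of the lower bound: with \<open>\<tau> = a - t\<close>, the inequality
  \<open>\<alpha> \<tau>\<^sup>2 / P + \<beta> (\<tau> - s)\<^sup>2 \<ge> \<alpha> \<beta> s\<^sup>2 / (P \<beta> + \<alpha>)\<close> is a completed square.\<close>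

lemma scalar_rip_rhs_lower_bound:
  fixes \<alpha> \<beta> P s t N a :: real
  assumes "\<alpha> > 0" "\<beta> \<ge> 0" "P \<ge> 1" "s \<ge> 0" "t \<ge> 0" "(a - t)^2 \<le> P * N"
  shows "(1 + \<beta>/(P*\<beta>+\<alpha>)) * \<alpha> * (s+t) * s \<le> \<alpha>*(N + s^2 + 2 * s * t) + \<beta>*(a - (s+t))^2"
proof -
  define D where "D = P*\<beta> + \<alpha>"
  define \<tau> where "\<tau> = a - t"
  have D: "D > 0" using assms by (simp add: D_def add_nonneg_pos)
  have P0: "P > 0" using assms by simp
  have k1: "\<alpha>*\<tau>^2/P \<le> \<alpha>*N"
    using assms(1,6) P0 by (simp add: \<tau>_def field_simps)
  have square: "(\<alpha>*\<tau>^2/P + \<beta>*(\<tau>-s)^2) * (P*D) - \<alpha>*\<beta> * s^2*P = (D*\<tau> - P*\<beta> * s)^2"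
    using P0 by (simp add: D_def field_simps power2_eq_square)
  have "P * (\<alpha>*\<beta> * s^2) \<le> P * ((\<alpha>*\<tau>^2/P + \<beta>*(\<tau>-s)^2) * D)"
    using square by (smt (verit) zero_le_power2 mult.commute mult.assoc)
  then have "\<alpha>*\<beta> * s^2 \<le> (\<alpha>*\<tau>^2/P + \<beta>*(\<tau>-s)^2) * D"
    using P0 by (rule mult_left_le_imp_le)
  then have k2: "\<alpha>*\<beta> * s^2/D \<le> \<alpha>*\<tau>^2/P + \<beta>*(\<tau>-s)^2"
    by (simp add: pos_divide_le_eq[OF D])
  have "1*\<beta> \<le> P*\<beta>" by (rule mult_right_mono) (use assms in auto)
  then have "\<beta>/D \<le> 1" using D assms by (simp add: D_def field_simps)
  then have k3: "\<alpha>*(s * t)*(\<beta>/D) \<le> \<alpha>*(s * t)"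
    by (intro mult_left_le) (use assms in auto)
  have "(1 + \<beta>/D) * \<alpha> * (s+t) * s = \<alpha>*(s^2 + s * t) + \<alpha>*\<beta> * s^2/D + \<alpha>*(s * t)*(\<beta>/D)"
    using D by (simp add: field_simps power2_eq_square)
  also have "\<dots> \<le> \<alpha>*(s^2 + 2 * s * t) + \<alpha>*\<beta> * s^2/D"
    using k3 by (simp add: algebra_simps)
  also have "\<dots> \<le> \<alpha>*(s^2 + 2 * s * t) + \<alpha>*\<tau>^2/P + \<beta>*(\<tau>-s)^2"
    using k2 by simp
  also have "\<dots> \<le> \<alpha>*(N + s^2 + 2 * s * t) + \<beta>*(a - (s+t))^2"
    using k1 by (simp add: \<tau>_def algebra_simps)
  finally show ?thesis by (simp add: D_def)
qed

lemma nonpos_of_squeeze: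
  fixes q c L w E :: real
  assumes "2 * L < q * c" "q > 0" "w \<ge> 0" "c * w \<le> E" "q * E \<le> 2 * L * w"
  shows "E \<le> 0"
proof -
  have "q * (c * w) \<le> q * E"
    using assms(2,4) by (simp add: mult_left_mono)
  then have "q * c * w \<le> 2 * L * w"
    using assms(5) by (simp add: mult.assoc)
  then have "w = 0"
    using mult_strict_right_mono[OF assms(1), of w] assms(3) by fastforce
  then show ?thesis
    using assms(2,5) by (simp add: mult_le_0_iff)
qed

lemma matrix_add_rdistrib: "(B + C) ** A = B ** A + C ** A"
  by (vector matrix_matrix_mult_def sum.distrib[symmetric] field_simps)

lemma matrix_diff_ldistrib: "(A::'a::ring_1^'n^'m) ** (B - C) = A ** B - A ** C"
  by (vector matrix_matrix_mult_def sum_subtractf[symmetric] field_simps)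

lemma matrix_diff_rdistrib: "((B::'a::ring_1^'n^'m) - C) ** A = B ** A - C ** A"
  by (vector matrix_matrix_mult_def sum_subtractf[symmetric] field_simps)

lemma matrix_vector_mult_axis: "(A::'a::comm_ring_1^'n^'m) *v axis j 1 = column j A"
  by (simp add: column_def matrix_vector_mult_def axis_def vec_eq_iff if_distrib cong: if_cong)

lemma matrix_vector_mult_column: "((A::'a::comm_ring_1^'n^'m) ** B) $ a $ i = (A *v column i B) $ a"
  by (simp add: matrix_matrix_mult_def matrix_vector_mult_def column_def)

lemma trace_mult_right_unit:
  fixes X :: "'a::comm_ring_1^'p^'d" and Z :: "'a^'d^'p"
  assumes "X ** F = X" and "F ** (Z ** X) = F"
  shows "trace (X ** Z) = trace F"
proof -
  have "trace (X ** Z) = trace (Z ** X)"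
    by (rule trace_mul_sym)
  also have "Z ** X = F ** (Z ** X) + (mat 1 - F) ** (Z ** X)"
    by (simp add: matrix_diff_rdistrib)
  also have "trace \<dots> = trace F + trace (((mat 1 - F) ** Z) ** X)"
    unfolding assms(2) by (simp add: trace_def sum.distrib matrix_mul_assoc)
  also have "trace (((mat 1 - F) ** Z) ** X) = trace (X ** ((mat 1 - F) ** Z))"
    by (rule trace_mul_sym)
  also have "X ** ((mat 1 - F) ** Z) = 0"
    by (simp add: matrix_mul_assoc matrix_diff_ldistrib assms(1))
  finally show ?thesis
    by (simp add: trace_def)
qed

lemma matrix_vector_mult_scaleR_right: "(A::'a::real_algebra_1^'n^'m) *v (r *\<^sub>R v) = r *\<^sub>R (A *v v)"
  by (simp add: matrix_vector_mult_def vec_eq_iff scaleR_sum_right)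

lemma scaleR_matrix_vector_mult: "(r *\<^sub>R (A::'a::real_algebra_1^'n^'m)) *v v = r *\<^sub>R (A *v v)"
  by (simp add: matrix_vector_mult_def vec_eq_iff scaleR_sum_right)

lemma sum_matrix_vector_mult: "(\<Sum>k\<in>S. M k) *v v = (\<Sum>k\<in>S. M k *v v)"
  by (induction S rule: infinite_finite_induct) (auto simp: matrix_vector_mult_add_rdistrib)

lemma meas_adj_matrix_vector_mult: "meas_adj A z *v v = (\<Sum>k\<in>UNIV. z$k *\<^sub>R (A k *v v))"
  by (simp add: meas_adj_def sum_matrix_vector_mult scaleR_matrix_vector_mult)

definition cinner :: "('a::comm_ring_1 \<Rightarrow> 'a) \<Rightarrow> 'a^'n \<Rightarrow> 'a^'n \<Rightarrow> 'a" where
  "cinner cj u v = (\<Sum>i\<in>UNIV. cj (u$i) * v$i)"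

definition dyad :: "('a::comm_ring_1 \<Rightarrow> 'a) \<Rightarrow> 'a^'m \<Rightarrow> 'a^'n \<Rightarrow> 'a^'n^'m" where
  "dyad cj u w = (\<chi> i j. u$i * cj (w$j))"

text \<open>The common structure of \<open>\<real>\<close> (with \<open>cj = rp = id\<close>) and \<open>\<complex>\<close> (with \<open>cj = cnj\<close>,
  \<open>rp = Re\<close>): the real inner product of \<open>'a\<close> is \<open>rp (cj a * b)\<close>, so the Euclidean inner
  product and norm on \<open>'a^'m^'n\<close> are the Frobenius ones, \<open>Re tr (A\<^sup>* B)\<close>.\<close>

locale conj_field =
  fixes cj :: "'a::{euclidean_space, real_normed_field} \<Rightarrow> 'a" and rp :: "'a \<Rightarrow> real"
  assumes cj_add: "cj (a + b) = cj a + cj b"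
    and cj_mult: "cj (a * b) = cj a * cj b"
    and cj_cj[simp]: "cj (cj a) = a"
    and cj_scaleR: "cj (r *\<^sub>R a) = r *\<^sub>R cj a"
    and cj_one[simp]: "cj 1 = 1"
    and inner_cj: "inner a b = rp (cj a * b)"
    and rp_cj[simp]: "rp (cj a) = rp a"
    and cj_mult_self: "cj a * a = of_real (norm a ^ 2)"
begin

lemma rp_eq_inner_one: "rp b = inner 1 b"
  using inner_cj[of 1 b] by simp

lemma rp_zero[simp]: "rp 0 = 0"
  by (simp add: rp_eq_inner_one)

lemma rp_sum: "rp (sum f S) = (\<Sum>i\<in>S. rp (f i))"
  by (simp add: rp_eq_inner_one inner_sum_right)

lemma rp_of_real[simp]: "rp (of_real r) = r"
  by (simp add: rp_eq_inner_one of_real_def flip: power2_norm_eq_inner)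

lemma cj_zero[simp]: "cj 0 = 0"
  using cj_add[of 0 0] by simp

lemma cj_minus: "cj (- a) = - cj a"
  using cj_add[of a "-a"] by (simp add: eq_neg_iff_add_eq_0 add.commute)

lemma cj_diff: "cj (a - b) = cj a - cj b"
  using cj_add[of a "-b"] by (simp add: cj_minus)

lemma cj_sum: "cj (sum f S) = (\<Sum>i\<in>S. cj (f i))"
  by (induction S rule: infinite_finite_induct) (auto simp: cj_add)

lemma inner_vec_cinner: "inner (u::'a^'n) v = rp (cinner cj u v)"
  by (simp add: inner_vec_def cinner_def rp_sum inner_cj)

lemma cinner_self: "cinner cj (u::'a^'n) u = of_real ((norm u)^2)"
proof -
  have "cinner cj u u = of_real (\<Sum>i\<in>UNIV. (norm (u$i))^2)"
    by (simp add: cinner_def cj_mult_self)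
  also have "(\<Sum>i\<in>UNIV. (norm (u$i))^2) = (norm u)^2"
    by (simp add: norm_vec_def L2_set_def sum_nonneg)
  finally show ?thesis .
qed

lemma cinner_zero_right[simp]: "cinner cj u 0 = 0"
  by (simp add: cinner_def)

lemma cinner_commute: "cinner cj v (u::'a^'n) = cj (cinner cj u v)"
  by (simp add: cinner_def cj_sum cj_mult mult.commute)

lemma cinner_scaleC_right: "cinner cj u (c *s v) = c * cinner cj u (v::'a^'n)"
  by (simp add: cinner_def sum_distrib_left mult_ac)

lemma cinner_matrix_vector_adj: "cinner cj ((A::'a^'n^'m) *v z) w = cinner cj z (adj cj A *v w)"
proof -
  have "cinner cj (A *v z) w = (\<Sum>i\<in>UNIV. \<Sum>j\<in>UNIV. cj (A$i$j) * cj (z$j) * w$i)"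
    by (simp add: cinner_def matrix_vector_mult_def cj_sum cj_mult sum_distrib_right)
  also have "\<dots> = (\<Sum>j\<in>UNIV. \<Sum>i\<in>UNIV. cj (A$i$j) * cj (z$j) * w$i)"
    by (rule sum.swap)
  also have "\<dots> = cinner cj z (adj cj A *v w)"
    by (simp add: cinner_def matrix_vector_mult_def adj_def sum_distrib_left mult_ac)
  finally show ?thesis .
qed

lemma inner_matrix_vector_adj: "inner ((A::'a^'n^'m) *v z) w = inner z (adj cj A *v w)"
  by (simp add: inner_vec_cinner cinner_matrix_vector_adj)

lemma frob_eq_inner: "frob cj rp (A::'a^'m^'n) B = inner A B"
  by (simp add: frob_def inner_vec_def rp_sum inner_cj)

lemma meas_eq_inner: "meas cj rp A S = (\<chi> k. inner (A k) S)"
  by (simp add: meas_def frob_eq_inner)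

lemma meas_add: "meas cj rp A (S + T) = meas cj rp A S + meas cj rp A T"
  by (simp add: meas_eq_inner vec_eq_iff inner_add_right)

lemma meas_diff: "meas cj rp A (S - T) = meas cj rp A S - meas cj rp A T"
  by (simp add: meas_eq_inner vec_eq_iff inner_diff_right)

lemma meas_scaleR: "meas cj rp A (r *\<^sub>R S) = r *\<^sub>R meas cj rp A S"
  by (simp add: meas_eq_inner vec_eq_iff)

lemma inner_meas: "inner (meas cj rp A S) (meas cj rp A T) = (\<Sum>k\<in>UNIV. inner (A k) S * inner (A k) T)"
  by (simp add: inner_vec_def meas_eq_inner)

lemma power2_norm_meas: "(norm (meas cj rp A S))^2 = (\<Sum>k\<in>UNIV. (inner (A k) S)^2)"
  by (simp only: power2_norm_eq_inner) (simp add: inner_meas power2_eq_square)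

lemma adj_adj[simp]: "adj cj (adj cj A) = A"
  by (simp add: adj_def vec_eq_iff)

lemma adj_add: "adj cj (A + B) = adj cj A + adj cj B"
  by (simp add: adj_def vec_eq_iff cj_add)

lemma adj_scaleR: "adj cj (r *\<^sub>R A) = r *\<^sub>R adj cj A"
  by (simp add: adj_def vec_eq_iff cj_scaleR)

lemma adj_mult: "adj cj ((A::'a^'n^'m) ** (B::'a^'p^'n)) = adj cj B ** adj cj A"
  by (simp add: adj_def vec_eq_iff matrix_matrix_mult_def cj_sum cj_mult mult.commute)

lemma inner_dyad: "inner (A::'a^'n^'m) (dyad cj v w) = inner v (A *v w)"
proof -
  have "inner A (dyad cj v w) = rp (\<Sum>i\<in>UNIV. \<Sum>j\<in>UNIV. cj (A$i$j) * (v$i * cj (w$j)))"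
    by (simp add: inner_vec_def rp_sum inner_cj dyad_def)
  also have "\<dots> = rp (cj (\<Sum>i\<in>UNIV. \<Sum>j\<in>UNIV. cj (A$i$j) * (v$i * cj (w$j))))"
    by simp
  also have "\<dots> = rp (cinner cj v (A *v w))"
    by (simp add: cj_sum cj_mult cinner_def matrix_vector_mult_def sum_distrib_left mult_ac)
  finally show ?thesis by (simp add: inner_vec_cinner)
qed

lemma dyad_matrix_vector: "dyad cj u w *v v = cinner cj w v *s u"
  by (simp add: dyad_def matrix_vector_mult_def cinner_def vec_eq_iff sum_distrib_left mult_ac)

lemma inner_dyad_dyad:
  "inner (dyad cj a b) (dyad cj c (d::'a^'n)) = rp (cinner cj b d * cinner cj c (a::'a^'m))"
  by (simp add: inner_dyad dyad_matrix_vector inner_vec_cinner cinner_scaleC_right)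

lemma matrix_mult_adj_dyad: "(X::'a^'p^'d) ** adj cj (dyad cj u z) = dyad cj (X *v z) u"
  by (simp add: dyad_def adj_def matrix_matrix_mult_def matrix_vector_mult_def vec_eq_iff
      sum_distrib_right sum_distrib_left cj_sum cj_mult mult_ac)

lemma dyad_mult_adj: "dyad cj u z ** adj cj (X::'a^'p^'d) = dyad cj u (X *v z)"
  by (simp add: dyad_def adj_def matrix_matrix_mult_def matrix_vector_mult_def vec_eq_iff
      sum_distrib_left cj_sum cj_mult mult_ac)

lemma outer_eq_dyad: "outer cj x = dyad cj x x"
  by (simp add: outer_def dyad_def)

lemma dyad_axis_mult_adj: "dyad cj u (axis j (1::'a)) ** adj cj (dyad cj u (axis j 1)) = outer cj u"
proof -
  have "cinner cj (axis j (1::'a)) (axis j 1) = 1"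
    by (simp add: cinner_def axis_def if_distrib if_distribR cong: if_cong)
  then show ?thesis by (simp only: dyad_mult_adj dyad_matrix_vector) (simp add: outer_eq_dyad)
qed

lemma dyad_add_left: "dyad cj (u + v) w = dyad cj u w + dyad cj v w"
  by (simp add: dyad_def vec_eq_iff algebra_simps)

lemma dyad_add_right: "dyad cj w (u + v) = dyad cj w u + dyad cj w v"
  by (simp add: dyad_def vec_eq_iff algebra_simps cj_add)

lemma dyad_diff_left: "dyad cj (u - v) w = dyad cj u w - dyad cj v w"
  by (simp add: dyad_def vec_eq_iff algebra_simps)

lemma dyad_diff_right: "dyad cj w (u - v) = dyad cj w u - dyad cj w v"
  by (simp add: dyad_def vec_eq_iff algebra_simps cj_diff)

lemma gram_eq_sum_columns: "gram cj (X::'a^'p^'d) = (\<Sum>j\<in>UNIV. outer cj (column j X))"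
  by (simp add: gram_def outer_def column_def adj_def matrix_matrix_mult_def vec_eq_iff sum_component)

lemma power2_norm_eq_sum_columns: "(norm (X::'a^'p^'d))^2 = (\<Sum>j\<in>UNIV. (norm (column j X))^2)"
proof -
  have "(norm X)^2 = (\<Sum>i\<in>UNIV. \<Sum>j\<in>UNIV. inner (X$i$j) (X$i$j))"
    by (simp add: power2_norm_eq_inner inner_vec_def)
  also have "\<dots> = (\<Sum>j\<in>UNIV. \<Sum>i\<in>UNIV. inner (X$i$j) (X$i$j))" by (rule sum.swap)
  also have "\<dots> = (\<Sum>j\<in>UNIV. (norm (column j X))^2)"
    by (simp add: power2_norm_eq_inner inner_vec_def column_def)
  finally show ?thesis .
qed

lemma inner_eq_trace: "inner (A::'a^'n^'m) B = rp (trace (adj cj A ** B))"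
proof -
  have "inner A B = rp (\<Sum>i\<in>UNIV. \<Sum>k\<in>UNIV. cj (A$i$k) * B$i$k)"
    by (simp add: inner_vec_def rp_sum inner_cj)
  also have "(\<Sum>i\<in>UNIV. \<Sum>k\<in>UNIV. cj (A$i$k) * B$i$k) = (\<Sum>k\<in>UNIV. \<Sum>i\<in>UNIV. cj (A$i$k) * B$i$k)"
    by (rule sum.swap)
  finally show ?thesis
    by (simp add: trace_def matrix_matrix_mult_def adj_def)
qed

lemma adj_mat_one[simp]: "adj cj (mat 1) = mat 1"
  by (simp add: adj_def vec_eq_iff mat_def)

lemma inner_mat_one_eq_trace: "inner (mat 1 :: 'a^'n^'n) A = rp (trace A)"
  by (simp add: inner_eq_trace)

lemma power2_norm_mat_one: "(norm (mat 1 :: 'a^'n^'n))^2 = real CARD('n)"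
proof -
  have "rp (of_nat CARD('n)) = real CARD('n)"
    using rp_of_real[of "real CARD('n)"] by (simp del: rp_of_real)
  then show ?thesis by (simp add: power2_norm_eq_inner inner_mat_one_eq_trace trace_I)
qed

lemma adj_idempotent_hermitian: "adj cj P ** P = adj cj P \<Longrightarrow> adj cj P = P"
  by (metis adj_adj adj_mult)

lemma power2_norm_adj_idempotent:
  assumes "adj cj P ** P = adj cj P"
  shows "(norm P)^2 = rp (trace P)"
proof -
  have "(norm P)^2 = rp (trace (adj cj P ** P))"
    by (simp only: power2_norm_eq_inner inner_eq_trace)
  also have "\<dots> = rp (trace (adj cj P))"
    by (simp only: assms)
  finally show ?thesis
    by (simp only: adj_idempotent_hermitian[OF assms])
qed

lemma power2_norm_adj_idempotent_le:
  assumes "adj cj (F::'a^'p^'p) ** F = adj cj F"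
  shows "(norm F)^2 \<le> real CARD('p)"
proof -
  have "(norm F)^2 = inner (mat 1) F"
    by (simp add: power2_norm_adj_idempotent[OF assms] inner_mat_one_eq_trace)
  also have "\<dots> \<le> norm (mat 1 :: 'a^'p^'p) * norm F"
    by (rule norm_cauchy_schwarz)
  also have "norm (mat 1 :: 'a^'p^'p) = sqrt (real CARD('p))"
    by (metis power2_norm_mat_one norm_ge_zero real_sqrt_unique)
  finally have "norm F \<le> sqrt (real CARD('p))"
    by (cases "norm F = 0") (auto simp: power2_eq_square)
  then have "(norm F)^2 \<le> (sqrt (real CARD('p)))^2"
    by (rule power_mono) simp
  then show ?thesis by simp
qed

lemma normal_equations_solvable: "\<exists>Z::'a^'r^'q. adj cj (Y::'a^'q^'r) ** (mat 1 - Y ** Z) = 0"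
proof -
  let ?S = "range (\<lambda>z::'a^'q. Y *v z)"
  have "subspace ?S"
    by (rule linear_subspace_image[OF matrix_vector_mul_linear subspace_UNIV])
  then have span_S: "span ?S = ?S" by simp
  have "\<exists>z. adj cj Y *v (axis i 1 - Y *v z) = 0" for i :: 'r
  proof -
    obtain u w where "u \<in> span ?S" and w: "\<And>s. s \<in> span ?S \<Longrightarrow> orthogonal w s"
      and split: "axis i 1 = u + w"
      using orthogonal_subspace_decomp_exists[of ?S "axis i 1"] by blast
    then have "u \<in> ?S" using span_S by simp
    then obtain z where "u = Y *v z" by blast
    then have residual: "axis i 1 - Y *v z = w" using split by simp
    have "Y *v (adj cj Y *v w) \<in> span ?S"
      by (rule span_base) simp
    then have "orthogonal w (Y *v (adj cj Y *v w))"
      by (rule w)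
    then have "inner (Y *v (adj cj Y *v w)) w = 0"
      by (simp add: orthogonal_def inner_commute)
    then have "inner (adj cj Y *v w) (adj cj Y *v w) = 0"
      by (simp only: inner_matrix_vector_adj)
    then have "adj cj Y *v (axis i 1 - Y *v z) = 0"
      by (simp add: residual)
    then show ?thesis ..
  qed
  then obtain zf where zf: "\<And>i. adj cj Y *v (axis i 1 - Y *v zf i) = 0" by metis
  define Z :: "'a^'r^'q" where "Z = (\<chi> j i. zf i $ j)"
  have "column i (mat 1 - Y ** Z) = axis i 1 - Y *v zf i" for i
    by (simp add: column_def vec_eq_iff mat_def axis_def matrix_matrix_mult_def
        matrix_vector_mult_def Z_def)
  then have "adj cj Y *v column i (mat 1 - Y ** Z) = 0" for i
    by (simp add: zf)
  then have "adj cj Y ** (mat 1 - Y ** Z) = 0"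
    by (simp add: vec_eq_iff matrix_vector_mult_column)
  then show ?thesis by blast
qed

text \<open>\<open>P\<close> is the orthogonal projector onto the column space of \<open>X\<close>. Its squared norm is its
  trace, which equals that of the orthogonal projector onto the row space of \<open>X\<close>, a \<open>p \<times> p\<close>
  matrix.\<close>

lemma column_space_projector:
  fixes X :: "'a^'p^'d"
  obtains P :: "'a^'d^'d" and Z :: "'a^'d^'p"
  where "P = X ** Z" "P ** X = X" "adj cj X ** P = adj cj X" "(norm P)^2 \<le> real CARD('p)"
proof -
  obtain Z :: "'a^'d^'p" where Z: "adj cj X ** (mat 1 - X ** Z) = 0"
    using normal_equations_solvable by blast
  obtain W :: "'a^'p^'d" where W: "adj cj (adj cj X) ** (mat 1 - adj cj X ** W) = 0"
    using normal_equations_solvable by blast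
  define P where "P = X ** Z"
  define F where "F = adj cj X ** W"
  have XP: "adj cj X ** P = adj cj X"
    using Z by (simp add: P_def matrix_diff_ldistrib)
  have XF: "X ** F = X"
    using W by (simp add: F_def matrix_diff_ldistrib)
  have "adj cj P ** P = adj cj Z ** (adj cj X ** P)"
    by (simp add: P_def adj_mult matrix_mul_assoc)
  then have PP: "adj cj P ** P = adj cj P"
    by (simp only: XP) (simp add: P_def adj_mult)
  have "P ** X = adj cj (adj cj X ** adj cj P)"
    by (simp add: adj_mult)
  then have PX: "P ** X = X"
    by (simp add: adj_idempotent_hermitian[OF PP] XP)
  have adj_F: "adj cj F = adj cj W ** X"
    by (simp add: F_def adj_mult)
  then have FF: "adj cj F ** F = adj cj F"
    by (simp add: XF flip: matrix_mul_assoc)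
  have F_eq: "F = adj cj W ** X"
    using adj_F adj_idempotent_hermitian[OF FF] by simp
  have "F ** (Z ** X) = adj cj W ** ((X ** Z) ** X)"
    by (simp add: F_eq matrix_mul_assoc)
  then have "F ** (Z ** X) = F"
    by (simp add: PX F_eq flip: P_def)
  then have "trace P = trace F"
    unfolding P_def by (rule trace_mult_right_unit[OF XF])
  then have "(norm P)^2 \<le> real CARD('p)"
    using power2_norm_adj_idempotent[OF PP] power2_norm_adj_idempotent[OF FF]
      power2_norm_adj_idempotent_le[OF FF] by simp
  with that P_def PX XP show ?thesis by blast
qed

lemma inner_hermitian_commute:
  assumes "hermitian cj A"
  shows "inner v ((A::'a^'n^'n) *v u) = inner u (A *v v)"
proof -
  have "inner v (A *v u) = inner (A *v u) v" by (simp add: inner_commute)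
  also have "\<dots> = inner u (adj cj A *v v)" by (rule inner_matrix_vector_adj)
  finally show ?thesis using assms by (simp add: hermitian_def)
qed

lemma psd_inner_nonneg: "psd cj rp A \<Longrightarrow> inner v ((A::'a^'n^'n) *v v) \<ge> 0"
  by (simp add: psd_def inner_vec_cinner cinner_def)

lemma psd_cauchy_schwarz:
  assumes "psd cj rp (A::'a^'n^'n)"
  shows "(inner u (A *v v))^2 \<le> inner u (A *v u) * inner v (A *v v)"
proof (rule nonneg_quadratic_discriminant)
  show "0 \<le> inner v (A *v v)" using psd_inner_nonneg[OF assms] .
  fix l :: real
  have "0 \<le> inner (u + l *\<^sub>R v) (A *v (u + l *\<^sub>R v))" using psd_inner_nonneg[OF assms] .
  also have "\<dots> = inner u (A *v u) + l * inner v (A *v u) + l * inner u (A *v v)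
      + l * l * inner v (A *v v)"
    by (simp add: matrix_vector_right_distrib matrix_vector_mult_scaleR_right inner_add_left
        inner_add_right algebra_simps)
  also have "\<dots> = inner u (A *v u) + 2 * inner u (A *v v) * l + inner v (A *v v) * l^2"
    using assms inner_hermitian_commute[of A v u]
    by (simp add: psd_def power2_eq_square algebra_simps)
  finally show "0 \<le> inner u (A *v u) + 2 * inner u (A *v v) * l + inner v (A *v v) * l^2" .
qed

lemma gram_add_scaleR:
  "gram cj ((X::'a^'p^'d) + t *\<^sub>R U) = gram cj X + t *\<^sub>R (X ** adj cj U + U ** adj cj X)
     + t^2 *\<^sub>R (U ** adj cj U)"
proof -
  have "gram cj (X + t *\<^sub>R U) = (X + t *\<^sub>R U) ** (adj cj X + t *\<^sub>R adj cj U)"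
    by (simp add: gram_def adj_add adj_scaleR)
  also have "\<dots> = X ** adj cj X + t *\<^sub>R (X ** adj cj U) + t *\<^sub>R (U ** adj cj X)
      + (t * t) *\<^sub>R (U ** adj cj U)"
    by (simp add: matrix_add_ldistrib matrix_add_rdistrib matrix_scalar_ac scaleR_add_right
        flip: scalar_matrix_assoc)
  finally show ?thesis
    by (simp add: gram_def power2_eq_square scaleR_add_right algebra_simps)
qed

lemma fobj_add_scaleR:
  fixes X U :: "'a^'p^'d" and A :: "'k::finite \<Rightarrow> 'a^'d^'d" and y :: "real^'k"
  defines "e \<equiv> y - meas cj rp A (gram cj X)"
    and "m\<^sub>1 \<equiv> meas cj rp A (X ** adj cj U + U ** adj cj X)"
    and "m\<^sub>2 \<equiv> meas cj rp A (U ** adj cj U)"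
  shows "fobj cj rp A y (X + t *\<^sub>R U) = inner e e + (-2 * inner e m\<^sub>1) * t
     + (inner m\<^sub>1 m\<^sub>1 - 2 * inner e m\<^sub>2) * t^2 + (2 * inner m\<^sub>1 m\<^sub>2) * t^3 + inner m\<^sub>2 m\<^sub>2 * t^4"
proof -
  have "y - meas cj rp A (gram cj (X + t *\<^sub>R U)) = e - t *\<^sub>R m\<^sub>1 - t^2 *\<^sub>R m\<^sub>2"
    by (simp add: gram_add_scaleR meas_add meas_scaleR e_def m\<^sub>1_def m\<^sub>2_def)
  then have "fobj cj rp A y (X + t *\<^sub>R U)
      = inner (e - t *\<^sub>R m\<^sub>1 - t^2 *\<^sub>R m\<^sub>2) (e - t *\<^sub>R m\<^sub>1 - t^2 *\<^sub>R m\<^sub>2)"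
    by (simp only: fobj_def power2_norm_eq_inner)
  then show ?thesis
    by (simp add: inner_diff_left inner_diff_right
        inner_commute[of m\<^sub>1 e] inner_commute[of m\<^sub>2 e] inner_commute[of m\<^sub>2 m\<^sub>1]
        power2_eq_square power3_eq_cube algebra_simps power4_eq_xxxx)
qed

lemma sosp_fobj_optimality:
  fixes X U :: "'a^'p^'d" and A :: "'k::finite \<Rightarrow> 'a^'d^'d" and y :: "real^'k"
  defines "e \<equiv> y - meas cj rp A (gram cj X)"
  assumes "sosp (fobj cj rp A y) X"
  shows "inner e (meas cj rp A (X ** adj cj U + U ** adj cj X)) = 0"
    and "2 * inner e (meas cj rp A (U ** adj cj U))
          \<le> (norm (meas cj rp A (X ** adj cj U + U ** adj cj X)))^2"
  using sosp_quartic_line[OF assms(2) fobj_add_scaleR[where y=y and A=A and X=X and U=U]]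
  by (auto simp: e_def power2_norm_eq_inner)

lemma sosp_fobj_residual_outer:
  fixes X :: "'a^'p^'d" and A :: "'k::finite \<Rightarrow> 'a^'d^'d" and x :: "'a^'d"
  defines "y \<equiv> meas cj rp A (outer cj x)"
  defines "e \<equiv> y - meas cj rp A (gram cj X)"
  assumes sosp: "sosp (fobj cj rp A y) X"
  shows "inner e (meas cj rp A (outer cj (x - X *v z))) = inner e e"
proof -
  let ?m = "meas cj rp A"
  note stationary = sosp_fobj_optimality(1)[OF sosp, folded e_def]
  define u where "u = X *v z"
  have "inner e (?m (gram cj X)) = 0"
    using stationary[of X] by (simp only: meas_add inner_add_right) (simp add: gram_def)
  then have e_y: "inner e y = inner e e"
    by (simp add: e_def inner_diff_right)
  have u_x: "inner e (?m (dyad cj u x)) + inner e (?m (dyad cj x u)) = 0"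
    using stationary[of "dyad cj x z"]
    by (simp add: matrix_mult_adj_dyad dyad_mult_adj u_def meas_add inner_add_right)
  have u_u: "inner e (?m (dyad cj u u)) = 0"
    using stationary[of "dyad cj u z"]
    by (simp only: matrix_mult_adj_dyad dyad_mult_adj meas_add inner_add_right flip: u_def)
  have "outer cj (x - u) = outer cj x - dyad cj u x - dyad cj x u + dyad cj u u"
    by (simp add: outer_eq_dyad dyad_diff_left dyad_diff_right)
  then have "inner e (?m (outer cj (x - u))) = inner e y"
    using u_x u_u by (simp add: meas_add meas_diff inner_add_right inner_diff_right y_def)
  then show ?thesis
    by (simp add: e_y u_def)
qed

lemma norm_meas_sym_dyad_le:
  assumes "\<forall>k. psd cj rp (A k)"
  shows "(norm (meas cj rp A (dyad cj u v + dyad cj v u)))\<^sup>2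
           \<le> 4 * (\<Sum>k\<in>UNIV. inner u (A k *v u) * inner v (A k *v v))"
proof -
  have "inner (A k) (dyad cj u v + dyad cj v u) = 2 * inner u (A k *v v)" for k
    using assms inner_hermitian_commute[of "A k" v u]
    by (simp add: psd_def inner_add_right inner_dyad)
  then have "(norm (meas cj rp A (dyad cj u v + dyad cj v u)))\<^sup>2
      = (\<Sum>k\<in>UNIV. 4 * (inner u (A k *v v))\<^sup>2)"
    by (simp add: power2_norm_meas power_mult_distrib)
  also have "\<dots> \<le> (\<Sum>k\<in>UNIV. 4 * (inner u (A k *v u) * inner v (A k *v v)))"
    by (intro sum_mono mult_left_mono psd_cauchy_schwarz) (use assms in auto)
  finally show ?thesis
    by (simp add: sum_distrib_left)
qed

lemma sum_norm_meas_sym_dyad_columns_le: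
  fixes X :: "'a^'p^'d"
  assumes "\<forall>k. psd cj rp (A k)"
  shows "(\<Sum>j\<in>UNIV. (norm (meas cj rp A (dyad cj (column j X) v + dyad cj v (column j X))))\<^sup>2)
           \<le> 4 * inner (meas cj rp A (outer cj v)) (meas cj rp A (gram cj X))"
proof -
  have "(\<Sum>j\<in>UNIV. (norm (meas cj rp A (dyad cj (column j X) v + dyad cj v (column j X))))\<^sup>2)
      \<le> (\<Sum>j\<in>UNIV. 4 * (\<Sum>k\<in>UNIV. inner (column j X) (A k *v column j X) * inner v (A k *v v)))"
    by (intro sum_mono norm_meas_sym_dyad_le assms)
  also have "\<dots> = 4 * (\<Sum>k\<in>UNIV. inner v (A k *v v) * (\<Sum>j\<in>UNIV. inner (column j X) (A k *v column j X)))"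
    by (simp add: sum_distrib_left mult_ac) (rule sum.swap)
  also have "\<dots> = 4 * inner (meas cj rp A (outer cj v)) (meas cj rp A (gram cj X))"
    by (simp add: inner_meas gram_eq_sum_columns inner_sum_right outer_eq_dyad inner_dyad)
  finally show ?thesis .
qed

text \<open>The second-order condition in the directions \<open>v e\<^sub>j\<^sup>*\<close>, \<open>j = 1, \<dots>, p\<close>.\<close>

lemma sosp_fobj_residual_bound:
  fixes X :: "'a^'p^'d" and A :: "'k::finite \<Rightarrow> 'a^'d^'d" and y :: "real^'k"
  defines "e \<equiv> y - meas cj rp A (gram cj X)"
  assumes psd: "\<forall>k. psd cj rp (A k)" and sosp: "sosp (fobj cj rp A y) X"
    and aligned: "inner e (meas cj rp A (outer cj v)) = inner e e"
  shows "(real CARD('p) + 2) * inner e e \<le> 2 * inner (meas cj rp A (outer cj v)) y"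
proof -
  let ?m = "meas cj rp A"
  let ?S = "\<lambda>j. dyad cj (column j X) v + dyad cj v (column j X)"
  have "2 * inner e e \<le> (norm (?m (?S j)))\<^sup>2" for j
  proof -
    have "X ** adj cj (dyad cj v (axis j 1)) + dyad cj v (axis j 1) ** adj cj X = ?S j"
      by (simp add: matrix_mult_adj_dyad dyad_mult_adj matrix_vector_mult_axis)
    then show ?thesis
      using sosp_fobj_optimality(2)[OF sosp, of "dyad cj v (axis j 1)"] aligned
      by (simp add: dyad_axis_mult_adj e_def)
  qed
  then have "(\<Sum>j\<in>(UNIV::'p set). 2 * inner e e) \<le> (\<Sum>j\<in>UNIV. (norm (?m (?S j)))\<^sup>2)"
    by (rule sum_mono)
  also have "\<dots> \<le> 4 * inner (?m (outer cj v)) (?m (gram cj X))"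
    by (rule sum_norm_meas_sym_dyad_columns_le[OF psd])
  also have "?m (gram cj X) = y - e"
    by (simp add: e_def)
  finally show ?thesis
    using aligned by (simp add: inner_diff_right inner_commute algebra_simps)
qed

lemma loewner_meas_adj_bound:
  fixes A :: "'k::finite \<Rightarrow> 'a^'d^'d"
  assumes "loewner_le cj rp ((1 / real CARD('k)) *\<^sub>R meas_adj A y) (c *\<^sub>R mat 1)"
  shows "inner (meas cj rp A (outer cj v)) y \<le> real CARD('k) * c * (norm v)\<^sup>2"
proof -
  have "0 \<le> inner v ((c *\<^sub>R mat 1 - (1 / real CARD('k)) *\<^sub>R meas_adj A y) *v v)"
    using assms psd_inner_nonneg unfolding loewner_le_def by blast
  also have "\<dots> = c * (norm v)\<^sup>2 - (1 / real CARD('k)) * (\<Sum>k\<in>UNIV. y$k * inner v (A k *v v))"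
    by (simp add: matrix_vector_mult_diff_rdistrib scaleR_matrix_vector_mult
        meas_adj_matrix_vector_mult inner_diff_right inner_sum_right power2_norm_eq_inner)
  also have "(\<Sum>k\<in>UNIV. y$k * inner v (A k *v v)) = inner (meas cj rp A (outer cj v)) y"
    unfolding inner_vec_def[of "meas cj rp A (outer cj v)" y]
    by (simp add: meas_eq_inner outer_eq_dyad inner_dyad mult.commute)
  finally show ?thesis
    by (simp add: field_simps)
qed

text \<open>If \<open>v\<close> is orthogonal to the column space of \<open>X\<close> and \<open>u\<close> lies in it, then
  \<open>X X\<^sup>* - (u + v)(u + v)\<^sup>*\<close> is the orthogonal sum of \<open>X X\<^sup>* - u u\<^sup>*\<close> and \<open>-(u v\<^sup>* + v u\<^sup>* + v v\<^sup>*)\<close>.\<close>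

lemma power2_norm_gram_diff_outer_split:
  fixes X :: "'a^'p^'d" and z :: "'a^'p"
  assumes Xv: "adj cj X *v v = 0"
  defines "u \<equiv> X *v z"
  shows "(norm (gram cj X - outer cj (u + v)))\<^sup>2
           = (norm (gram cj X - outer cj u))\<^sup>2 + ((norm v)\<^sup>2)\<^sup>2 + 2 * (norm v)\<^sup>2 * (norm u)\<^sup>2"
proof -
  define N where "N = gram cj X - outer cj u"
  define R where "R = dyad cj u v + dyad cj v u + dyad cj v v"
  have uv: "cinner cj u v = 0"
    by (simp add: u_def cinner_matrix_vector_adj Xv)
  then have vu: "cinner cj v u = 0"
    by (simp add: cinner_commute[of v u])
  have split: "gram cj X - outer cj (u + v) = N - R"
    by (simp add: N_def R_def outer_eq_dyad dyad_add_left dyad_add_right algebra_simps)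
  have Nw: "N *v w = X *v (adj cj X *v w) - cinner cj u w *s u" for w
    by (simp add: N_def matrix_vector_mult_diff_rdistrib gram_def matrix_vector_mul_assoc
        outer_eq_dyad dyad_matrix_vector)
  have "inner v (X *v (adj cj X *v u)) = 0"
    by (simp add: inner_commute[of v] inner_matrix_vector_adj Xv)
  then have "inner v (N *v u) = 0"
    by (simp only: Nw inner_diff_right) (simp add: inner_vec_cinner cinner_scaleC_right vu)
  moreover have "N *v v = 0"
    by (simp add: Nw Xv uv)
  ultimately have NR: "inner N R = 0"
    by (simp add: R_def inner_add_right inner_dyad)
  have RR: "inner R R = ((norm v)\<^sup>2)\<^sup>2 + 2 * (norm v)\<^sup>2 * (norm u)\<^sup>2"
    by (simp add: R_def inner_add_left inner_add_right inner_dyad_dyad uv vu cinner_self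
        power2_eq_square flip: of_real_mult)
  show ?thesis
    by (simp add: split N_def[symmetric] power2_norm_eq_inner inner_diff_left inner_diff_right
        NR RR inner_commute[of R N])
qed

text \<open>\<open>P\<close> has squared norm at most \<open>p\<close> and fixes the column space of \<open>X\<close>, on which
  \<open>X X\<^sup>* - u u\<^sup>*\<close> lives, so Cauchy-Schwarz against \<open>P\<close> bounds its trace.\<close>

lemma trace_gram_diff_outer_bound:
  fixes X :: "'a^'p^'d"
  assumes PX: "P ** X = X" and P: "(norm P)\<^sup>2 \<le> real CARD('p)"
  shows "((norm X)\<^sup>2 - (norm (X *v z))\<^sup>2)\<^sup>2 \<le> real CARD('p) * (norm (gram cj X - outer cj (X *v z)))\<^sup>2"
proof -
  have P_column: "P *v column j X = column j X" for j
    by (simp add: matrix_vector_mult_axis[symmetric] matrix_vector_mul_assoc PX)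
  have "inner P (gram cj X) = (\<Sum>j\<in>UNIV. inner (column j X) (column j X))"
    by (simp add: gram_eq_sum_columns inner_sum_right outer_eq_dyad inner_dyad P_column)
  also have "\<dots> = (norm X)\<^sup>2"
    by (simp add: power2_norm_eq_sum_columns power2_norm_eq_inner)
  finally have "inner P (gram cj X - outer cj (X *v z)) = (norm X)\<^sup>2 - (norm (X *v z))\<^sup>2"
    by (simp add: inner_diff_right outer_eq_dyad inner_dyad matrix_vector_mul_assoc PX
        power2_norm_eq_inner)
  then have "((norm X)\<^sup>2 - (norm (X *v z))\<^sup>2)\<^sup>2 \<le> (norm P)\<^sup>2 * (norm (gram cj X - outer cj (X *v z)))\<^sup>2"
    by (metis Cauchy_Schwarz_ineq power2_norm_eq_inner)
  also have "\<dots> \<le> real CARD('p) * (norm (gram cj X - outer cj (X *v z)))\<^sup>2"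
    using P by (simp add: mult_right_mono)
  finally show ?thesis .
qed

lemma sosp_fobj_residual_upper_bound:
  fixes X :: "'a^'p^'d" and A :: "'n::finite \<Rightarrow> 'a^'d^'d" and x :: "'a^'d"
  defines "y \<equiv> meas cj rp A (outer cj x)"
  defines "e \<equiv> y - meas cj rp A (gram cj X)"
  assumes psd: "\<forall>k. psd cj rp (A k)"
    and loewner: "loewner_le cj rp ((1 / real CARD('n)) *\<^sub>R meas_adj A y) ((L * (norm x)\<^sup>2) *\<^sub>R mat 1)"
    and sosp: "sosp (fobj cj rp A y) X"
  shows "(real CARD('p) + 2) * inner e e
           \<le> 2 * (real CARD('n) * L * (norm x)\<^sup>2 * (norm (x - X *v z))\<^sup>2)"
proof -
  have "inner e (meas cj rp A (outer cj (x - X *v z))) = inner e e"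
    using sosp_fobj_residual_outer[OF sosp[unfolded y_def]] by (simp flip: y_def e_def)
  then have "(real CARD('p) + 2) * inner e e \<le> 2 * inner (meas cj rp A (outer cj (x - X *v z))) y"
    using sosp_fobj_residual_bound[OF psd sosp] by (simp add: e_def)
  also have "\<dots> \<le> 2 * (real CARD('n) * L * (norm x)\<^sup>2 * (norm (x - X *v z))\<^sup>2)"
    using loewner_meas_adj_bound[OF loewner] by (simp add: mult.assoc)
  finally show ?thesis .
qed

lemma rip_rhs_lower_bound:
  fixes X :: "'a^'p^'d" and z :: "'a^'p"
  assumes "\<alpha> > 0" "\<beta> \<ge> 0" and PX: "P ** X = X" and P: "(norm P)\<^sup>2 \<le> real CARD('p)"
    and orth: "adj cj X *v (x - X *v z) = 0"
  shows "(1 + \<beta> / (real CARD('p) * \<beta> + \<alpha>)) * \<alpha> * ((norm x)\<^sup>2 * (norm (x - X *v z))\<^sup>2)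
           \<le> \<alpha> * (norm (gram cj X - outer cj x))\<^sup>2 + \<beta> * ((norm X)\<^sup>2 - (norm x)\<^sup>2)\<^sup>2"
proof -
  define p u v where "p = real CARD('p)" and "u = X *v z" and "v = x - X *v z"
  define s t where "s = (norm v)\<^sup>2" and "t = (norm u)\<^sup>2"
  have x_split: "x = u + v"
    by (simp add: u_def v_def)
  have "orthogonal u v"
    by (simp add: orthogonal_def u_def v_def inner_matrix_vector_adj orth)
  then have norm_x: "(norm x)\<^sup>2 = s + t"
    by (simp add: x_split norm_add_Pythagorean s_def t_def)
  have split: "(norm (gram cj X - outer cj x))\<^sup>2 = (norm (gram cj X - outer cj u))\<^sup>2 + s\<^sup>2 + 2 * s * t"
    using power2_norm_gram_diff_outer_split[OF orth[folded v_def], of z, folded u_def, folded x_split]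
    by (simp add: s_def t_def mult_ac)
  have gap: "((norm X)\<^sup>2 - t)\<^sup>2 \<le> p * (norm (gram cj X - outer cj u))\<^sup>2"
    using trace_gram_diff_outer_bound[OF PX P, of z, folded u_def] by (simp add: t_def p_def)
  have "(1 + \<beta> / (p * \<beta> + \<alpha>)) * \<alpha> * ((norm x)\<^sup>2 * s) = (1 + \<beta> / (p * \<beta> + \<alpha>)) * \<alpha> * (s + t) * s"
    by (simp add: norm_x)
  also have "\<dots> \<le> \<alpha> * ((norm (gram cj X - outer cj u))\<^sup>2 + s\<^sup>2 + 2 * s * t)
      + \<beta> * ((norm X)\<^sup>2 - (s + t))\<^sup>2"
    by (rule scalar_rip_rhs_lower_bound[OF assms(1,2) _ _ _ gap]) (simp_all add: p_def s_def t_def)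
  finally show ?thesis
    by (simp add: split norm_x p_def s_def v_def)
qed

theorem sosp_fobj_gram_eq_outer:
  fixes x :: "'a^'d" and A :: "'n::finite \<Rightarrow> 'a^'d^'d" and X :: "'a^'p^'d"
  assumes psd: "\<forall>k. psd cj rp (A k)" and "\<alpha> \<ge> 0" "\<beta> \<ge> 0" "L \<ge> 0"
    and rip: "(1 / real CARD('n)) * (norm (meas cj rp A (gram cj X - outer cj x)))\<^sup>2
            \<ge> \<alpha> * (norm (gram cj X - outer cj x))\<^sup>2 + \<beta> * ((norm X)\<^sup>2 - (norm x)\<^sup>2)\<^sup>2"
    and loewner: "loewner_le cj rp ((1 / real CARD('n)) *\<^sub>R meas_adj A (meas cj rp A (outer cj x)))
                       ((L * (norm x)\<^sup>2) *\<^sub>R mat 1)"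
    and constants: "(real CARD('p) + 2) * (1 + \<beta> / (real CARD('p) * \<beta> + \<alpha>)) * \<alpha> > 2 * L"
    and sosp: "sosp (fobj cj rp A (meas cj rp A (outer cj x))) X"
  shows "gram cj X = outer cj x"
proof -
  define e where "e = meas cj rp A (outer cj x) - meas cj rp A (gram cj X)"
  obtain P Z where "P = X ** Z" and PX: "P ** X = X" and XP: "adj cj X ** P = adj cj X"
    and P: "(norm P)\<^sup>2 \<le> real CARD('p)"
    using column_space_projector by metis
  have orth: "adj cj X *v (x - X *v (Z *v x)) = 0"
    by (simp add: matrix_vector_mult_diff_distrib matrix_vector_mul_assoc XP
        flip: \<open>P = X ** Z\<close>)
  have "\<alpha> > 0"
    using constants \<open>\<alpha> \<ge> 0\<close> \<open>L \<ge> 0\<close> by (cases "\<alpha> = 0") auto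
  have "meas cj rp A (gram cj X - outer cj x) = - e"
    by (simp add: e_def meas_diff)
  then have residual: "(norm (meas cj rp A (gram cj X - outer cj x)))\<^sup>2 = inner e e"
    by (simp add: power2_norm_eq_inner)
  have "(1 / real CARD('n)) * inner e e \<le> 0"
  proof (rule nonpos_of_squeeze)
    show "(real CARD('p) + 2) * ((1 / real CARD('n)) * inner e e)
        \<le> 2 * L * ((norm x)\<^sup>2 * (norm (x - X *v (Z *v x)))\<^sup>2)"
      using sosp_fobj_residual_upper_bound[OF psd loewner sosp, of "Z *v x"]
      by (simp add: e_def field_simps)
    show "(1 + \<beta> / (real CARD('p) * \<beta> + \<alpha>)) * \<alpha> * ((norm x)\<^sup>2 * (norm (x - X *v (Z *v x)))\<^sup>2)
        \<le> (1 / real CARD('n)) * inner e e"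
      using rip_rhs_lower_bound[OF \<open>\<alpha> > 0\<close> \<open>\<beta> \<ge> 0\<close> PX P orth] rip by (simp add: residual)
  qed (use constants in \<open>simp_all add: mult.assoc\<close>)
  then have "\<alpha> * (norm (gram cj X - outer cj x))\<^sup>2 \<le> 0"
    using rip \<open>\<beta> \<ge> 0\<close> by (simp add: residual) (smt (verit) mult_nonneg_nonneg zero_le_power2)
  then show ?thesis
    using \<open>\<alpha> > 0\<close> by (simp add: mult_le_0_iff)
qed

end

interpretation real: conj_field "id :: real \<Rightarrow> real" id
  by unfold_locales (simp_all add: power2_eq_square)

interpretation complex: conj_field cnj Re
proof
  fix a b :: complex
  show "inner a b = Re (cnj a * b)" by (simp add: inner_complex_def)
  show "cnj a * a = of_real ((norm a)^2)" by (metis complex_norm_square mult.commute of_real_power)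
qed (simp_all add: scaleR_conv_of_real)

theorem theorem2:
  shows
  "(\<forall>(x::real^'d) (A::'n::finite \<Rightarrow> real^'d^'d) (\<alpha>::real) (\<beta>::real) (L::real).
      (\<forall>k. psd id id (A k)) \<and> \<alpha> \<ge> 0 \<and> \<beta> \<ge> 0 \<and> L \<ge> 0 \<and>
      (\<forall>X::real^'p^'d.
          (1 / real CARD('n)) * (norm (meas id id A (gram id X - outer id x)))\<^sup>2
            \<ge> \<alpha> * (norm (gram id X - outer id x))\<^sup>2 + \<beta> * ((norm X)\<^sup>2 - (norm x)\<^sup>2)\<^sup>2) \<and>
      loewner_le id id ((1 / real CARD('n)) *\<^sub>R meas_adj A (meas id id A (outer id x)))
                       ((L * (norm x)\<^sup>2) *\<^sub>R mat 1) \<and>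
      (real CARD('p) + 2) * (1 + \<beta> / (real CARD('p) * \<beta> + \<alpha>)) * \<alpha> > 2 * L
      \<longrightarrow> (\<forall>X::real^'p::finite^'d::finite.
             sosp (fobj id id A (meas id id A (outer id x))) X \<longrightarrow> gram id X = outer id x))
 \<and>
   (\<forall>(x::complex^'d) (A::'n \<Rightarrow> complex^'d^'d) (\<alpha>::real) (\<beta>::real) (L::real).
      (\<forall>k. psd cnj Re (A k)) \<and> \<alpha> \<ge> 0 \<and> \<beta> \<ge> 0 \<and> L \<ge> 0 \<and>
      (\<forall>X::complex^'p^'d.
          (1 / real CARD('n)) * (norm (meas cnj Re A (gram cnj X - outer cnj x)))\<^sup>2
            \<ge> \<alpha> * (norm (gram cnj X - outer cnj x))\<^sup>2 + \<beta> * ((norm X)\<^sup>2 - (norm x)\<^sup>2)\<^sup>2) \<and>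
      loewner_le cnj Re ((1 / real CARD('n)) *\<^sub>R meas_adj A (meas cnj Re A (outer cnj x)))
                        ((L * (norm x)\<^sup>2) *\<^sub>R mat 1) \<and>
      (real CARD('p) + 2) * (1 + \<beta> / (real CARD('p) * \<beta> + \<alpha>)) * \<alpha> > 2 * L
      \<longrightarrow> (\<forall>X::complex^'p^'d.
             sosp (fobj cnj Re A (meas cnj Re A (outer cnj x))) X \<longrightarrow> gram cnj X = outer cnj x))"
  by (intro conjI allI impI; elim conjE)
    (blast intro: real.sosp_fobj_gram_eq_outer complex.sosp_fobj_gram_eq_outer)+

end
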